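(* Let $T \subseteq \mathbb{Z}_2^\omega$ be a thin set such that $T\cap X\neq\emptyset$ for every equivalence class $X$ of the relation $\sim$ on $\mathbb{Z}_2^\omega$. Then the game $\mathcal{G}(T)$ is undetermined, i.e. neither Ego nor Alter has a winning strategy in $\mathcal{G}(T)$.
   Context: $\mathbb{Z}_2^\omega$ is the set of infinite binary sequences indexed by $\omega=\{0,1,2,\dots\}$; $\mathbb{Z}_2^+=\bigcup_{n\ge1}\mathbb{Z}_2^n$ is the set of nonempty finite binary words. The Hamming distance is $\mathrm{hd}(x,y)=|\{k: x(k)\ne y(k)\}|\in\omega\cup\{\omega\}$, and $x\sim y$ iff $\mathrm{hd}(x,y)$ is finite. A set $T\subseteq\mathbb{Z}_2^\omega$ is thin if for every $n\in\omega$ the map $x\mapsto x|_{\omega\setminus\{n\}}$ is injective on $T$. For $F\subseteq \mathbb{Z}_2^\omega$, $\mathcal{G}(F)$ is the infinite two-player game of perfect information in which Ego and Alter alternately choose words in $\mathbb{Z}_2^+$, Ego moving first; the outcome is the concatenation of all moves, an element of $\mathbb{Z}_2^\omega$, and Ego wins iff the outcome lies in $F$. Strategies for Ego are functions $e:\bigcup_{n\ge0}(\mathbb{Z}_2^+)^n\to\mathbb{Z}_2^+$ of Alter's previous moves, strategies for Alter are functions $a:\bigcup_{n\ge1}(\mathbb{Z}_2^+)^n\to\mathbb{Z}_2^+$ of Ego's previous moves; a strategy is winning for a player if that player wins every play in which he follows it. *)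

theory Defs
  imports Main "HOL-Library.FuncSet"
begin

definition ham_equiv :: "(nat \<Rightarrow> bool) \<Rightarrow> (nat \<Rightarrow> bool) \<Rightarrow> bool" where
  "ham_equiv x y \<longleftrightarrow> finite {k. x k \<noteq> y k}"

definition ham_rel :: "((nat \<Rightarrow> bool) \<times> (nat \<Rightarrow> bool)) set" where
  "ham_rel = {(x, y). ham_equiv x y}"

definition thin :: "(nat \<Rightarrow> bool) set \<Rightarrow> bool" where
  "thin T \<longleftrightarrow> (\<forall>n. inj_on (\<lambda>x. restrict x (- {n})) T)"

definition words :: "bool list list \<Rightarrow> bool" where
  "words xs \<longleftrightarrow> (\<forall>w\<in>set xs. w \<noteq> [])"

text \<open>Ego strategies: from the (possibly empty) list of Alter's previous moves to a word.\<close>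
definition ego_strategy :: "(bool list list \<Rightarrow> bool list) \<Rightarrow> bool" where
  "ego_strategy e \<longleftrightarrow> (\<forall>xs. words xs \<longrightarrow> e xs \<noteq> [])"

text \<open>Alter strategies: from the nonempty list of Ego's previous moves to a word.\<close>
definition alter_strategy :: "(bool list list \<Rightarrow> bool list) \<Rightarrow> bool" where
  "alter_strategy a \<longleftrightarrow> (\<forall>xs. xs \<noteq> [] \<and> words xs \<longrightarrow> a xs \<noteq> [])"

fun rounds :: "(bool list list \<Rightarrow> bool list) \<Rightarrow> (bool list list \<Rightarrow> bool list) \<Rightarrow> nat
    \<Rightarrow> bool list list \<times> bool list list" where
  "rounds e a 0 = ([], [])"
| "rounds e a (Suc n) =
     (let (es, as) = rounds e a n; es' = es @ [e as] in (es', as @ [a es']))"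

definition move :: "(bool list list \<Rightarrow> bool list) \<Rightarrow> (bool list list \<Rightarrow> bool list) \<Rightarrow> nat \<Rightarrow> bool list" where
  "move e a m = (if even m then fst (rounds e a (Suc (m div 2))) ! (m div 2)
                 else snd (rounds e a (Suc (m div 2))) ! (m div 2))"

text \<open>Outcome = concatenation of all moves (each move nonempty, so the prefix of
  the first k+1 moves has length > k).\<close>
definition outcome :: "(bool list list \<Rightarrow> bool list) \<Rightarrow> (bool list list \<Rightarrow> bool list) \<Rightarrow> nat \<Rightarrow> bool" where
  "outcome e a k = concat (map (move e a) [0..<Suc k]) ! k"

definition ego_wins :: "(nat \<Rightarrow> bool) set \<Rightarrow> bool" where
  "ego_wins F \<longleftrightarrow> (\<exists>e. ego_strategy e \<and> (\<forall>a. alter_strategy a \<longrightarrow> outcome e a \<in> F))"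

definition alter_wins :: "(nat \<Rightarrow> bool) set \<Rightarrow> bool" where
  "alter_wins F \<longleftrightarrow> (\<exists>a. alter_strategy a \<and> (\<forall>e. ego_strategy e \<longrightarrow> outcome e a \<notin> F))"

end

theory Submission
  imports Defs "HOL-Library.Nat_Bijection" "HOL-Library.Omega_Words_Fun"
begin

text \<open>
  Ego cannot win: against an Ego strategy e, two copycat strategies for Alter let e play against
  itself. Each one answers with e's moves from the play against the other one, which is possible
  because Ego's moves in one play are Alter's moves in the other. The two outcomes then differ
  exactly in the bit that follows Ego's first move, so a thin set cannot contain both.

  Alter cannot win: given an Alter strategy a, countably many plays against a, indexed by the finite
  sets D of natural numbers, are simulated at once by interleaving Alter's replies in a single
  sequence of words with concatenation x. In the play for D, Ego's moves are the blocks of this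
  sequence between Alter's replies of that play, the first block being flipped at the positions
  in D. Since a only sees Ego's moves, its replies are exactly the stored ones, so the outcome is
  x flipped on D. Some y \<sim> x lies in T, and the play for D = {m. x m \<noteq> y m} has outcome y.
\<close>

definition concat_seq :: "(nat \<Rightarrow> 'a list) \<Rightarrow> 'a word" where
  "concat_seq M k = concat (map M [0..<Suc k]) ! k"

lemma length_concat_map_upt_ge:
  assumes "\<And>i. M i \<noteq> []"
  shows "n \<le> length (concat (map M [0..<n]))"
proof (induction n)
  case (Suc n)
  then show ?case using assms[of n] by (cases "M n") auto
qed simp

lemma nth_concat_map_upt_mono:
  assumes "m \<le> n" "k < length (concat (map M [0..<m]))"
  shows "concat (map M [0..<n]) ! k = concat (map M [0..<m]) ! k"
proof -
  have "[0..<n] = [0..<m] @ [m..<n]"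
    using upt_add_eq_append[of 0 m "n - m"] assms(1) by simp
  then show ?thesis using assms(2) by (simp add: nth_append)
qed

lemma concat_seq_eq_nth:
  assumes "\<And>i. M i \<noteq> []" "k < length (concat (map M [0..<n]))"
  shows "concat_seq M k = concat (map M [0..<n]) ! k"
proof (cases "n \<le> Suc k")
  case True
  then show ?thesis
    unfolding concat_seq_def using nth_concat_map_upt_mono[OF True assms(2)] by simp
next
  case False
  have "k < length (concat (map M [0..<Suc k]))"
    using length_concat_map_upt_ge[of M "Suc k", OF assms(1)] by simp
  with False show ?thesis
    unfolding concat_seq_def using nth_concat_map_upt_mono[of "Suc k" n k M] by simp
qed

lemma concat_seq_unfold:
  assumes "\<And>i. M i \<noteq> []"
  shows "concat_seq M = M 0 \<frown> concat_seq (\<lambda>i. M (Suc i))"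
proof
  fix k
  define N where "N = concat (map (\<lambda>i. M (Suc i)) [0..<Suc k])"
  have first_rest: "concat (map M [0..<Suc (Suc k)]) = M 0 @ N"
    unfolding N_def map_upt_Suc[of M "Suc k"] by simp
  have len: "Suc k \<le> length N"
    unfolding N_def by (rule length_concat_map_upt_ge) (rule assms)
  have "concat_seq M k = (M 0 @ N) ! k"
    unfolding first_rest[symmetric]
    by (rule concat_seq_eq_nth[OF assms]) (use len in \<open>simp add: first_rest del: upt_Suc\<close>)
  moreover have "concat_seq (\<lambda>i. M (Suc i)) (k - length (M 0)) = N ! (k - length (M 0))"
    unfolding N_def by (rule concat_seq_eq_nth) (use assms len in \<open>simp_all add: N_def\<close>)
  ultimately show "concat_seq M k = (M 0 \<frown> concat_seq (\<lambda>i. M (Suc i))) k"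
    by (simp add: nth_append conc_def)
qed

definition segment :: "(nat \<Rightarrow> 'a list) \<Rightarrow> (nat \<Rightarrow> nat) \<Rightarrow> nat \<Rightarrow> 'a list" where
  "segment C b n = concat (map C [b n..<b (Suc n)])"

lemma segment_nonempty:
  assumes "strict_mono b" "\<And>i. C i \<noteq> []"
  shows "segment C b n \<noteq> []"
proof -
  have "b n < b (Suc n)" using assms(1) by (simp add: strict_mono_def)
  then show ?thesis using assms(2) by (simp add: segment_def upt_conv_Cons)
qed

lemma concat_map_segment:
  assumes "strict_mono b" "b 0 = 0"
  shows "concat (map (segment C b) [0..<n]) = concat (map C [0..<b n])"
proof (induction n)
  case (Suc n)
  have "b n \<le> b (Suc n)" using assms(1) by (simp add: strict_mono_less_eq)
  then have "[0..<b (Suc n)] = [0..<b n] @ [b n..<b (Suc n)]"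
    using upt_add_eq_append[of 0 "b n" "b (Suc n) - b n"] by simp
  then show ?case using Suc by (simp add: segment_def)
qed (simp add: assms(2))

lemma concat_seq_segment:
  assumes "strict_mono b" "b 0 = 0" "\<And>i. C i \<noteq> []"
  shows "concat_seq (segment C b) = concat_seq C"
proof
  fix k
  have ne: "segment C b i \<noteq> []" for i using segment_nonempty[OF assms(1,3)] .
  have "Suc k \<le> length (concat (map (segment C b) [0..<Suc k]))"
    by (rule length_concat_map_upt_ge[of _ "Suc k", OF ne])
  then have "k < length (concat (map C [0..<b (Suc k)]))"
    unfolding concat_map_segment[OF assms(1,2)] by simp
  then show "concat_seq (segment C b) k = concat_seq C k"
    using concat_seq_eq_nth[of "segment C b", OF ne, of k "Suc k"]
      concat_seq_eq_nth[of C, OF assms(3), of k "b (Suc k)"]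
    unfolding concat_map_segment[OF assms(1,2)] by simp
qed

fun course_of_values_list :: "('a list \<Rightarrow> 'a) \<Rightarrow> nat \<Rightarrow> 'a list" where
  "course_of_values_list s 0 = []"
| "course_of_values_list s (Suc n) = course_of_values_list s n @ [s (course_of_values_list s n)]"

definition course_of_values :: "('a list \<Rightarrow> 'a) \<Rightarrow> nat \<Rightarrow> 'a" where
  "course_of_values s n = s (course_of_values_list s n)"

lemma course_of_values_list_eq: "course_of_values_list s n = map (course_of_values s) [0..<n]"
  by (induction n) (simp_all add: course_of_values_def)

lemma course_of_values_eq: "course_of_values s n = s (map (course_of_values s) [0..<n])"
  by (simp add: course_of_values_def course_of_values_list_eq)

lemma set_decode_subset_lessThan: "set_decode x \<subseteq> {..<x}"
proof
  fix n assume "n \<in> set_decode x"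
  then have "odd (x div 2 ^ n)" by (simp add: set_decode_def)
  then have "\<not> x < 2 ^ n" by (metis div_less even_zero)
  with less_exp[of n] show "n \<in> {..<x}" by (simp del: less_exp)
qed

definition flip_at :: "nat set \<Rightarrow> bool list \<Rightarrow> bool list" where
  "flip_at D u = map (\<lambda>i. u ! i \<noteq> (i \<in> D)) [0..<length u]"

lemma conc_flip_at:
  assumes "D \<subseteq> {..<length u}"
  shows "flip_at D u \<frown> z = (\<lambda>m. (u \<frown> z) m \<noteq> (m \<in> D))"
  using assms by (auto simp: conc_def flip_at_def)

definition ego_move ::
    "(bool list list \<Rightarrow> bool list) \<Rightarrow> (bool list list \<Rightarrow> bool list) \<Rightarrow> nat \<Rightarrow> bool list" where
  "ego_move e a i = fst (rounds e a (Suc i)) ! i"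

definition alter_move ::
    "(bool list list \<Rightarrow> bool list) \<Rightarrow> (bool list list \<Rightarrow> bool list) \<Rightarrow> nat \<Rightarrow> bool list" where
  "alter_move e a i = snd (rounds e a (Suc i)) ! i"

lemma rounds_eq_moves:
  "rounds e a n = (map (ego_move e a) [0..<n], map (alter_move e a) [0..<n])"
proof (induction n)
  case (Suc n)
  define es where "es = map (ego_move e a) [0..<n] @ [e (map (alter_move e a) [0..<n])]"
  have r: "rounds e a (Suc n) = (es, map (alter_move e a) [0..<n] @ [a es])"
    using Suc.IH by (simp add: es_def Let_def)
  then have "ego_move e a n = e (map (alter_move e a) [0..<n])" "alter_move e a n = a es"
    by (simp_all add: ego_move_def alter_move_def es_def nth_append)
  then show ?case using r by (simp add: es_def)
qed simp

lemma ego_move_eq: "ego_move e a i = e (map (alter_move e a) [0..<i])"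
  using rounds_eq_moves[of e a "Suc i"] rounds_eq_moves[of e a i]
  by (simp add: Let_def nth_append)

lemma alter_move_eq: "alter_move e a i = a (map (ego_move e a) [0..<Suc i])"
  using rounds_eq_moves[of e a "Suc i"] rounds_eq_moves[of e a i]
  by (simp add: Let_def ego_move_eq)

lemma move_even: "move e a (2 * i) = ego_move e a i"
  by (simp add: move_def ego_move_def)

lemma move_odd: "move e a (Suc (2 * i)) = alter_move e a i"
  by (simp add: move_def alter_move_def)

lemma outcome_eq_concat_seq: "outcome e a = concat_seq (move e a)"
  by (simp add: outcome_def concat_seq_def fun_eq_iff)

lemma moves_nonempty:
  assumes "ego_strategy e" "alter_strategy a"
  shows "ego_move e a i \<noteq> [] \<and> alter_move e a i \<noteq> []"
proof (induction i rule: less_induct)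
  case (less i)
  have "words (map (alter_move e a) [0..<i])" using less by (auto simp: words_def)
  then have ego: "ego_move e a i \<noteq> []"
    using assms(1) by (simp add: ego_move_eq ego_strategy_def)
  have "words (map (ego_move e a) [0..<Suc i])"
    using less ego by (auto simp: words_def less_Suc_eq)
  then have "alter_move e a i \<noteq> []"
    using assms(2) unfolding alter_move_eq alter_strategy_def by (simp del: upt_Suc)
  with ego show ?case ..
qed

lemma move_nonempty:
  assumes "ego_strategy e" "alter_strategy a"
  shows "move e a n \<noteq> []"
proof (cases "even n")
  case True
  then obtain i where "n = 2 * i" by blast
  then show ?thesis using moves_nonempty[OF assms] by (simp add: move_even)
next
  case False
  then obtain i where "n = Suc (2 * i)" using oddE by fastforce
  then show ?thesis using moves_nonempty[OF assms] by (simp add: move_odd)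
qed

lemma words_tl: "words xs \<Longrightarrow> words (tl xs)"
  by (cases xs) (simp_all add: words_def)

lemma thin_conc_flip:
  assumes "thin T" "u \<frown> [False] \<frown> z \<in> T"
  shows "u \<frown> [True] \<frown> z \<notin> T"
proof
  assume "u \<frown> [True] \<frown> z \<in> T"
  moreover have "restrict (u \<frown> [False] \<frown> z) (- {length u}) =
      restrict (u \<frown> [True] \<frown> z) (- {length u})"
    by (auto simp: restrict_def conc_def nth_append)
  ultimately have "u \<frown> [False] \<frown> z = u \<frown> [True] \<frown> z"
    using assms unfolding thin_def inj_on_def by blast
  then have "(u \<frown> [False] \<frown> z) (length u) = (u \<frown> [True] \<frown> z) (length u)" by simp
  then show False by simp
qed

text \<open>Each strategy feeds e the list of Alter's moves of the other play, rebuilt from Ego's moves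
  after the first one: (True # y) # ys in the play against copycat_True e, and [False] # ys in the
  play against copycat_False e.\<close>

definition copycat_False :: "(bool list list \<Rightarrow> bool list) \<Rightarrow> bool list list \<Rightarrow> bool list" where
  "copycat_False e xs = (case tl xs of [] \<Rightarrow> [False] | y # ys \<Rightarrow> e ((True # y) # ys))"

definition copycat_True :: "(bool list list \<Rightarrow> bool list) \<Rightarrow> bool list list \<Rightarrow> bool list" where
  "copycat_True e xs = (if tl xs = [] then True # e [[False]] else e ([False] # tl xs))"

lemma alter_strategy_copycat_False:
  assumes "ego_strategy e"
  shows "alter_strategy (copycat_False e)"
  unfolding alter_strategy_def
proof (intro allI impI)
  fix xs assume "xs \<noteq> [] \<and> words xs"
  then have "words (tl xs)" by (simp add: words_tl)
  then show "copycat_False e xs \<noteq> []"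
    using assms by (simp add: copycat_False_def ego_strategy_def words_def split: list.split)
qed

lemma alter_strategy_copycat_True:
  assumes "ego_strategy e"
  shows "alter_strategy (copycat_True e)"
  unfolding alter_strategy_def
proof (intro allI impI)
  fix xs assume "xs \<noteq> [] \<and> words xs"
  then have "words (tl xs)" by (simp add: words_tl)
  then show "copycat_True e xs \<noteq> []"
    using assms by (simp add: copycat_True_def ego_strategy_def words_def)
qed

lemma copycat_first_alter_moves:
  "alter_move e (copycat_False e) 0 = [False]"
  "alter_move e (copycat_True e) 0 = True # ego_move e (copycat_False e) 1"
proof -
  show F: "alter_move e (copycat_False e) 0 = [False]"
    by (simp add: alter_move_eq copycat_False_def)
  show "alter_move e (copycat_True e) 0 = True # ego_move e (copycat_False e) 1"
    by (simp add: alter_move_eq ego_move_eq[of e "copycat_False e" "Suc 0"] F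
        copycat_True_def copycat_False_def)
qed

lemma copycat_alter_moves:
  "alter_move e (copycat_False e) (Suc k) = ego_move e (copycat_True e) (Suc k) \<and>
   alter_move e (copycat_True e) (Suc k) = ego_move e (copycat_False e) (Suc (Suc k))"
proof (induction k rule: less_induct)
  case (less k)
  let ?aF = "copycat_False e" and ?aT = "copycat_True e"
  have IH_F: "alter_move e ?aF (Suc i) = ego_move e ?aT (Suc i)"
    and IH_T: "alter_move e ?aT (Suc i) = ego_move e ?aF (Suc (Suc i))" if "i < k" for i
    using less that by blast+
  have "map (\<lambda>i. alter_move e ?aT (Suc i)) [0..<k] = map (\<lambda>i. ego_move e ?aF (Suc (Suc i))) [0..<k]"
    by (simp add: IH_T)
  then have F: "alter_move e ?aF (Suc k) = ego_move e ?aT (Suc k)"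
    unfolding alter_move_eq[of e ?aF] ego_move_eq[of e ?aT] map_upt_Suc copycat_first_alter_moves
    by (simp add: copycat_False_def del: upt_Suc map_eq_conv)
  have "map (\<lambda>i. alter_move e ?aF (Suc i)) [0..<Suc k] =
      map (\<lambda>i. ego_move e ?aT (Suc i)) [0..<Suc k]"
    using F IH_F less_Suc_eq by (auto simp del: upt_Suc)
  then have "alter_move e ?aT (Suc k) = ego_move e ?aF (Suc (Suc k))"
    unfolding alter_move_eq[of e ?aT] ego_move_eq[of e ?aF] map_upt_Suc[of _ "Suc k"]
      copycat_first_alter_moves
    by (simp add: copycat_True_def del: upt_Suc map_eq_conv)
  with F show ?case ..
qed

lemma copycat_True_moves:
  "move e (copycat_True e) (Suc 0) = True # move e (copycat_False e) (Suc (Suc 0))"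
  "move e (copycat_True e) (Suc (Suc n)) = move e (copycat_False e) (Suc (Suc (Suc n)))"
proof -
  show "move e (copycat_True e) (Suc 0) = True # move e (copycat_False e) (Suc (Suc 0))"
    using move_odd[of e _ 0] move_even[of e _ 1]
    by (simp add: copycat_first_alter_moves numeral_2_eq_2)
  show "move e (copycat_True e) (Suc (Suc n)) = move e (copycat_False e) (Suc (Suc (Suc n)))"
  proof (cases "even n")
    case True
    then obtain k where "n = 2 * k" by blast
    then show ?thesis
      using move_even[of e _ "Suc k"] move_odd[of e _ "Suc k"] copycat_alter_moves[of e k] by simp
  next
    case False
    then obtain k where "n = Suc (2 * k)" using oddE by fastforce
    then show ?thesis
      using move_odd[of e _ "Suc k"] move_even[of e _ "Suc (Suc k)"] copycat_alter_moves[of e k]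
      by simp
  qed
qed

lemma copycat_outcomes:
  assumes "ego_strategy e"
  obtains Z where "outcome e (copycat_False e) = e [] \<frown> [False] \<frown> Z"
    and "outcome e (copycat_True e) = e [] \<frown> [True] \<frown> Z"
proof
  let ?aF = "copycat_False e" and ?aT = "copycat_True e"
  have neF: "move e ?aF i \<noteq> []" and neT: "move e ?aT i \<noteq> []" for i
    using move_nonempty assms alter_strategy_copycat_False alter_strategy_copycat_True by blast+
  have first_moves: "move e ?aF 0 = e []" "move e ?aT 0 = e []" "move e ?aF (Suc 0) = [False]"
    using move_even[of e _ 0] move_odd[of e _ 0]
    by (simp_all add: ego_move_eq copycat_first_alter_moves)
  define Z where "Z = concat_seq (\<lambda>i. move e ?aF (Suc (Suc i)))"
  have Z: "Z = move e ?aF (Suc (Suc 0)) \<frown> concat_seq (\<lambda>i. move e ?aF (Suc (Suc (Suc i))))"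
    unfolding Z_def by (rule concat_seq_unfold) (rule neF)
  have "outcome e ?aF = move e ?aF 0 \<frown> move e ?aF (Suc 0) \<frown> Z"
    unfolding outcome_eq_concat_seq concat_seq_unfold[of "move e ?aF", OF neF]
      concat_seq_unfold[of "\<lambda>i. move e ?aF (Suc i)", OF neF] Z_def ..
  then show "outcome e ?aF = e [] \<frown> [False] \<frown> Z"
    by (simp only: first_moves)
  have "outcome e ?aT =
      move e ?aT 0 \<frown> move e ?aT (Suc 0) \<frown> concat_seq (\<lambda>i. move e ?aT (Suc (Suc i)))"
    unfolding outcome_eq_concat_seq concat_seq_unfold[of "move e ?aT", OF neT]
      concat_seq_unfold[of "\<lambda>i. move e ?aT (Suc i)", OF neT] ..
  then show "outcome e ?aT = e [] \<frown> [True] \<frown> Z"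
    by (simp add: first_moves copycat_True_moves Z del: conc_conc)
qed

lemma ego_not_wins:
  assumes "thin T"
  shows "\<not> ego_wins T"
proof
  assume "ego_wins T"
  then obtain e where e: "ego_strategy e" and wins: "\<And>a. alter_strategy a \<Longrightarrow> outcome e a \<in> T"
    unfolding ego_wins_def by blast
  obtain Z where "outcome e (copycat_False e) = e [] \<frown> [False] \<frown> Z"
    and "outcome e (copycat_True e) = e [] \<frown> [True] \<frown> Z"
    using copycat_outcomes[OF e] .
  then show False
    using thin_conc_flip[OF assms] wins alter_strategy_copycat_False[OF e]
      alter_strategy_copycat_True[OF e] by metis
qed

text \<open>Alter's k-th reply in the simulated play j is stored at position Suc (prod_encode (k, j)) of
  sim_replies a (position 0 is unused); sim_bound j n is the position at which the n-th move of that
  play starts, Ego's moves being the blocks between consecutive replies.\<close>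

definition sim_bound :: "nat \<Rightarrow> nat \<Rightarrow> nat" where
  "sim_bound j n = (case n of 0 \<Rightarrow> 0 | Suc m \<Rightarrow> Suc (prod_encode (m div 2, j)) + m mod 2)"

lemma sim_bound_0 [simp]: "sim_bound j 0 = 0"
  by (simp add: sim_bound_def)

lemma sim_bound_reply: "sim_bound j (Suc (2 * k)) = Suc (prod_encode (k, j))"
  by (simp add: sim_bound_def)

lemma sim_bound_after_reply: "sim_bound j (Suc (Suc (2 * k))) = Suc (sim_bound j (Suc (2 * k)))"
  by (simp add: sim_bound_def)

lemma strict_mono_sim_bound: "strict_mono (sim_bound j)"
proof (rule strict_mono_Suc_iff[THEN iffD2], intro allI)
  fix n
  show "sim_bound j n < sim_bound j (Suc n)"
  proof (cases n)
    case (Suc m)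
    show ?thesis
    proof (cases "even m")
      case True
      then show ?thesis using Suc by (auto simp: sim_bound_def)
    next
      case False
      then obtain k where "m = Suc (2 * k)" using oddE by fastforce
      then show ?thesis using Suc by (simp add: sim_bound_def prod_encode_def)
    qed
  qed (simp add: sim_bound_def)
qed

lemma less_sim_bound_1: "j < sim_bound j 1"
  using le_prod_encode_2[of j 0] unfolding sim_bound_def by simp

definition sim_ego_move :: "(nat \<Rightarrow> bool list) \<Rightarrow> nat \<Rightarrow> nat \<Rightarrow> bool list" where
  "sim_ego_move C j k =
     (if k = 0 then flip_at (set_decode j) (segment C (sim_bound j) 0)
      else segment C (sim_bound j) (2 * k))"

definition sim_step :: "(bool list list \<Rightarrow> bool list) \<Rightarrow> bool list list \<Rightarrow> bool list" where
  "sim_step a L = (if L = [] then [False] else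
     case prod_decode (length L - 1) of (k, j) \<Rightarrow> a (map (sim_ego_move (nth L) j) [0..<Suc k]))"

definition sim_replies :: "(bool list list \<Rightarrow> bool list) \<Rightarrow> nat \<Rightarrow> bool list" where
  "sim_replies a = course_of_values (sim_step a)"

definition sim_ego :: "(bool list list \<Rightarrow> bool list) \<Rightarrow> nat \<Rightarrow> bool list list \<Rightarrow> bool list" where
  "sim_ego a j xs = sim_ego_move (sim_replies a) j (length xs)"

lemma sim_ego_move_cong:
  assumes "\<And>n. n < sim_bound j (Suc (2 * k)) \<Longrightarrow> C n = C' n"
  shows "sim_ego_move C j k = sim_ego_move C' j k"
proof -
  have "segment C (sim_bound j) (2 * k) = segment C' (sim_bound j) (2 * k)"
    unfolding segment_def by (intro arg_cong[where f = concat] map_cong) (simp_all add: assms)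
  then show ?thesis by (cases "k = 0") (simp_all add: sim_ego_move_def)
qed

lemma sim_ego_move_nonempty:
  assumes "\<And>n. n < sim_bound j (Suc (2 * k)) \<Longrightarrow> C n \<noteq> []"
  shows "sim_ego_move C j k \<noteq> []"
proof -
  have less: "sim_bound j (2 * k) < sim_bound j (Suc (2 * k))"
    using strict_mono_sim_bound by (rule strict_monoD) simp
  then have "segment C (sim_bound j) (2 * k) \<noteq> []"
    using assms by (simp add: segment_def upt_conv_Cons)
  then show ?thesis by (auto simp: sim_ego_move_def flip_at_def)
qed

lemma sim_replies_reply:
  "sim_replies a (sim_bound j (Suc (2 * k))) = a (map (sim_ego_move (sim_replies a) j) [0..<Suc k])"
proof -
  define L where "L = map (sim_replies a) [0..<sim_bound j (Suc (2 * k))]"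
  have L: "length L = Suc (prod_encode (k, j))" by (simp add: L_def sim_bound_reply)
  have moves_eq:
    "map (sim_ego_move (nth L) j) [0..<Suc k] = map (sim_ego_move (sim_replies a) j) [0..<Suc k]"
  proof (rule map_cong)
    fix i assume "i \<in> set [0..<Suc k]"
    then have "sim_bound j (Suc (2 * i)) \<le> sim_bound j (Suc (2 * k))"
      by (auto simp: strict_mono_less_eq[OF strict_mono_sim_bound])
    then show "sim_ego_move (nth L) j i = sim_ego_move (sim_replies a) j i"
      by (intro sim_ego_move_cong) (simp add: L_def)
  qed simp
  have "sim_replies a (sim_bound j (Suc (2 * k))) = sim_step a L"
    unfolding sim_replies_def L_def by (rule course_of_values_eq)
  also have "\<dots> = a (map (sim_ego_move (nth L) j) [0..<Suc k])"
    using L by (auto simp: sim_step_def simp del: upt_Suc)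
  finally show ?thesis by (simp only: moves_eq)
qed

lemma sim_replies_nonempty:
  assumes "alter_strategy a"
  shows "sim_replies a n \<noteq> []"
proof (induction n rule: less_induct)
  case (less n)
  show ?case
  proof (cases n)
    case 0
    then show ?thesis by (simp add: sim_replies_def course_of_values_def sim_step_def)
  next
    case (Suc m)
    obtain k j where "prod_decode m = (k, j)" by fastforce
    then have n: "n = sim_bound j (Suc (2 * k))"
      using Suc prod_decode_inverse[of m] by (simp add: sim_bound_reply)
    have "words (map (sim_ego_move (sim_replies a) j) [0..<Suc k])"
    proof -
      have "sim_ego_move (sim_replies a) j i \<noteq> []" if "i \<le> k" for i
      proof (rule sim_ego_move_nonempty)
        fix n' assume "n' < sim_bound j (Suc (2 * i))"
        moreover have "sim_bound j (Suc (2 * i)) \<le> n"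
          using that strict_mono_sim_bound n by (simp add: strict_mono_less_eq)
        ultimately show "sim_replies a n' \<noteq> []" using less by simp
      qed
      then show ?thesis by (auto simp: words_def simp del: upt_Suc)
    qed
    then show ?thesis
      using assms n sim_replies_reply[of a j k] by (simp add: alter_strategy_def del: upt_Suc)
  qed
qed

lemma ego_strategy_sim_ego:
  assumes "alter_strategy a"
  shows "ego_strategy (sim_ego a j)"
  unfolding ego_strategy_def sim_ego_def
  using sim_ego_move_nonempty sim_replies_nonempty[OF assms] by blast

lemma sim_ego_moves:
  "move (sim_ego a j) a =
     (segment (sim_replies a) (sim_bound j))(0 := sim_ego_move (sim_replies a) j 0)"
proof
  fix n
  let ?S = "segment (sim_replies a) (sim_bound j)"
  have ego: "ego_move (sim_ego a j) a = sim_ego_move (sim_replies a) j"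
    by (simp add: fun_eq_iff ego_move_eq sim_ego_def)
  have "alter_move (sim_ego a j) a k = sim_replies a (sim_bound j (Suc (2 * k)))" for k
    by (simp add: alter_move_eq ego sim_replies_reply del: upt_Suc)
  then have alter: "alter_move (sim_ego a j) a k = ?S (Suc (2 * k))" for k
    by (simp add: segment_def sim_bound_after_reply)
  show "move (sim_ego a j) a n = (?S(0 := sim_ego_move (sim_replies a) j 0)) n"
  proof (cases "even n")
    case True
    then obtain k where "n = 2 * k" by blast
    then show ?thesis by (simp add: move_even ego sim_ego_move_def)
  next
    case False
    then obtain k where "n = Suc (2 * k)" using oddE by fastforce
    then show ?thesis by (simp add: move_odd alter)
  qed
qed

lemma outcome_sim_ego:
  assumes "alter_strategy a"
  shows "outcome (sim_ego a j) a = (\<lambda>m. concat_seq (sim_replies a) m \<noteq> (m \<in> set_decode j))"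
proof -
  let ?S = "segment (sim_replies a) (sim_bound j)"
  have R: "sim_replies a n \<noteq> []" for n using sim_replies_nonempty[OF assms] .
  have S: "?S n \<noteq> []" for n using segment_nonempty[OF strict_mono_sim_bound R] .
  have "j < sim_bound j 1" by (rule less_sim_bound_1)
  also have "\<dots> \<le> length (?S 0)"
    using length_concat_map_upt_ge[of "sim_replies a", OF R] by (simp add: segment_def)
  finally have D: "set_decode j \<subseteq> {..<length (?S 0)}"
    using set_decode_subset_lessThan by fastforce
  define M where "M = ?S(0 := flip_at (set_decode j) (?S 0))"
  have "flip_at (set_decode j) (?S 0) \<noteq> []" using S[of 0] by (simp add: flip_at_def)
  then have M: "M n \<noteq> []" for n using S by (simp add: M_def)
  have "outcome (sim_ego a j) a = concat_seq M"
    unfolding outcome_eq_concat_seq sim_ego_moves M_def by (simp add: sim_ego_move_def)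
  also have "\<dots> = flip_at (set_decode j) (?S 0) \<frown> concat_seq (\<lambda>i. ?S (Suc i))"
    unfolding concat_seq_unfold[of M, OF M] by (simp add: M_def)
  also have "\<dots> = (\<lambda>m. concat_seq ?S m \<noteq> (m \<in> set_decode j))"
    unfolding conc_flip_at[OF D] concat_seq_unfold[of ?S, OF S] ..
  also have "\<dots> = (\<lambda>m. concat_seq (sim_replies a) m \<noteq> (m \<in> set_decode j))"
    unfolding concat_seq_segment[OF strict_mono_sim_bound sim_bound_0 R] ..
  finally show ?thesis .
qed

lemma alter_not_wins:
  assumes "\<forall>X \<in> UNIV // ham_rel. T \<inter> X \<noteq> {}"
  shows "\<not> alter_wins T"
proof
  assume "alter_wins T"
  then obtain a where a: "alter_strategy a" and wins: "\<And>e. ego_strategy e \<Longrightarrow> outcome e a \<notin> T"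
    unfolding alter_wins_def by blast
  define x where "x = concat_seq (sim_replies a)"
  have "ham_rel `` {x} \<in> UNIV // ham_rel" by (rule quotientI) simp
  with assms obtain y where y: "y \<in> T" and "(x, y) \<in> ham_rel" by blast
  then have "finite {m. x m \<noteq> y m}" by (simp add: ham_rel_def ham_equiv_def)
  then have "set_decode (set_encode {m. x m \<noteq> y m}) = {m. x m \<noteq> y m}" by simp
  then have "outcome (sim_ego a (set_encode {m. x m \<noteq> y m})) a = y"
    by (auto simp: outcome_sim_ego[OF a] x_def[symmetric])
  then show False using wins[OF ego_strategy_sim_ego[OF a]] y by metis
qed

theorem proposition8:
  fixes T :: "(nat \<Rightarrow> bool) set"
  assumes "thin T"
    and "\<forall>X \<in> UNIV // ham_rel. T \<inter> X \<noteq> {}"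
  shows "\<not> ego_wins T \<and> \<not> alter_wins T"
  using ego_not_wins[OF assms(1)] alter_not_wins[OF assms(2)] by blast

end
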